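(* Let $N_t, K \ge 1$ be integers, let $\boldsymbol{h}_1,\dots,\boldsymbol{h}_K \in \mathbb{C}^{N_t\times 1}$, and let $\Gamma \ge 0$ and $P>0$. Consider the convex problem $$(\mathrm{P1.1}):\quad \min_{\boldsymbol{S}_x \succeq \boldsymbol{0}} \ \mathrm{tr}(\boldsymbol{S}_x^{-1}) \quad \text{s.t.}\quad \boldsymbol{h}_k^H \boldsymbol{S}_x \boldsymbol{h}_k \ge \Gamma\ \ \forall k\in\{1,\dots,K\},\qquad \mathrm{tr}(\boldsymbol{S}_x)\le P,$$ where $\mathrm{tr}(\boldsymbol{S}_x^{-1})$ is interpreted as $+\infty$ if $\boldsymbol{S}_x$ is singular, and assume (P1.1) is strictly feasible (Slater's condition holds). Let $\lambda\ge 0$ be the dual variable associated with the constraint $\mathrm{tr}(\boldsymbol{S}_x)\le P$ and $\mu_k\ge 0$ the dual variable associated with the constraint $\boldsymbol{h}_k^H\boldsymbol{S}_x\boldsymbol{h}_k\ge\Gamma$, so that the Lagrangian is $$\mathcal{L}(\boldsymbol{S}_x,\lambda,\{\mu_k\}) = \mathrm{tr}(\boldsymbol{S}_x^{-1}) + \Gamma\sum_{k=1}^K\mu_k + \mathrm{tr}\Big(\big(\lambda\boldsymbol{I}-\sum_{k=1}^K \mu_k\boldsymbol{h}_k\boldsymbol{h}_k^H\big)\boldsymbol{S}_x\Big) - \lambda P,$$ the dual function is $g(\lambda,\{\mu_k\}) = \inf_{\boldsymbol{S}_x\succeq\boldsymbol{0}}\mathcal{L}(\boldsymbol{S}_x,\lambda,\{\mu_k\})$,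 and the dual problem is to maximize $g$ over $\lambda\ge0$, $\mu_k\ge0$. Let $\lambda^{\mathrm{opt}}$, $\{\mu_k^{\mathrm{opt}}\}$ be an optimal solution of this dual problem and define $\boldsymbol{A}(\lambda^{\mathrm{opt}},\{\mu_k^{\mathrm{opt}}\}) = \lambda^{\mathrm{opt}}\boldsymbol{I} - \sum_{k=1}^K\mu_k^{\mathrm{opt}}\boldsymbol{h}_k\boldsymbol{h}_k^H$, which satisfies $\boldsymbol{A}(\lambda^{\mathrm{opt}},\{\mu_k^{\mathrm{opt}}\})\succeq\boldsymbol{0}$, with eigenvalue decomposition $\boldsymbol{A}(\lambda^{\mathrm{opt}},\{\mu_k^{\mathrm{opt}}\}) = \boldsymbol{U}^{\mathrm{opt}}\boldsymbol{\Lambda}^{\mathrm{opt}}\boldsymbol{U}^{\mathrm{opt}H}$, where $\boldsymbol{U}^{\mathrm{opt}}$ is unitary and $\boldsymbol{\Lambda}^{\mathrm{opt}}=\mathrm{diag}(\alpha_1^{\mathrm{opt}},\dots,\alpha_{N_t}^{\mathrm{opt}})$ with $\alpha_1^{\mathrm{opt}}\ge\dots\ge\alpha_{N_t}^{\mathrm{opt}}$. Then $\mathrm{rank}(\boldsymbol{A}(\lambda^{\mathrm{opt}},\{\mu_k^{\mathrm{opt}}\}))=N_t$, so $\alpha_1^{\mathrm{opt}}\ge\dots\ge\alpha_{N_t}^{\mathrm{opt}}>0$, and the optimal solution of (P1.1) is $$\boldsymbol{S}_x^{\mathrm{opt}} = \boldsymbol{U}^{\mathrm{opt}}\,\mathr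m{diag}\big((\alpha_1^{\mathrm{opt}})^{-1/2},\dots,(\alpha_{N_t}^{\mathrm{opt}})^{-1/2}\big)\,\boldsymbol{U}^{\mathrm{opt}H}.$$
   Context: All matrices are complex; $(\cdot)^H$ denotes conjugate transpose, $\boldsymbol{S}\succeq\boldsymbol{0}$ means Hermitian positive semidefinite, $\boldsymbol{I}$ is the $N_t\times N_t$ identity. In the application, $\Gamma=\sigma^2(2^{\bar R}-1)$ for a noise power $\sigma^2>0$ and rate threshold $\bar R\ge 0$. *)

theory Defs
  imports "HOL-Analysis.Analysis"
begin

text \<open>Complex N_t x N_t matrices are rendered as complex^'n^'n (N_t = CARD('n)).\<close>

definition cadj :: "complex^'n^'m \<Rightarrow> complex^'m^'n" where
  "cadj A = (\<chi> i j. cnj (A $ j $ i))"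

definition hermitian :: "complex^'n^'n \<Rightarrow> bool" where
  "hermitian A \<longleftrightarrow> cadj A = A"

definition qform :: "complex^'n^'n \<Rightarrow> complex^'n \<Rightarrow> complex" where
  "qform A x = (\<Sum>i\<in>UNIV. cnj (x $ i) * (A *v x) $ i)"

definition psd :: "complex^'n^'n \<Rightarrow> bool" where
  "psd A \<longleftrightarrow> hermitian A \<and> (\<forall>x. 0 \<le> Re (qform A x))"

definition unitary :: "complex^'n^'n \<Rightarrow> bool" where
  "unitary U \<longleftrightarrow> cadj U ** U = mat 1 \<and> U ** cadj U = mat 1"

definition cdiag :: "('n \<Rightarrow> complex) \<Rightarrow> complex^'n^'n" where
  "cdiag d = (\<chi> i j. if i = j then d i else 0)"

definition outer :: "complex^'n \<Rightarrow> complex^'n^'n" where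
  "outer v = (\<chi> i j. v $ i * cnj (v $ j))"

definition obj :: "complex^'n^'n \<Rightarrow> ereal" where
  "obj S = (if invertible S then ereal (Re (trace (matrix_inv S))) else \<infinity>)"

definition feasible :: "(nat \<Rightarrow> complex^'n) \<Rightarrow> nat \<Rightarrow> real \<Rightarrow> real \<Rightarrow> complex^'n^'n \<Rightarrow> bool" where
  "feasible h K \<Gamma> P S \<longleftrightarrow> psd S \<and> (\<forall>k<K. \<Gamma> \<le> Re (qform S (h k))) \<and> Re (trace S) \<le> P"

definition strictly_feasible :: "(nat \<Rightarrow> complex^'n) \<Rightarrow> nat \<Rightarrow> real \<Rightarrow> real \<Rightarrow> bool" where
  "strictly_feasible h K \<Gamma> P \<longleftrightarrow> (\<exists>S::complex^'n^'n. psd S \<and> invertible S \<and>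
      (\<forall>k<K. \<Gamma> < Re (qform S (h k))) \<and> Re (trace S) < P)"

definition Amat :: "(nat \<Rightarrow> complex^'n) \<Rightarrow> nat \<Rightarrow> real \<Rightarrow> (nat \<Rightarrow> real) \<Rightarrow> complex^'n^'n" where
  "Amat h K lam mu = lam *\<^sub>R mat 1 - (\<Sum>k<K. mu k *\<^sub>R outer (h k))"

definition lagrangian :: "(nat \<Rightarrow> complex^'n) \<Rightarrow> nat \<Rightarrow> real \<Rightarrow> real \<Rightarrow>
    complex^'n^'n \<Rightarrow> real \<Rightarrow> (nat \<Rightarrow> real) \<Rightarrow> ereal" where
  "lagrangian h K \<Gamma> P S lam mu =
     obj S + ereal (\<Gamma> * (\<Sum>k<K. mu k)) + ereal (Re (trace (Amat h K lam mu ** S))) - ereal (lam * P)"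

definition dual_fun :: "(nat \<Rightarrow> complex^'n) \<Rightarrow> nat \<Rightarrow> real \<Rightarrow> real \<Rightarrow> real \<Rightarrow> (nat \<Rightarrow> real) \<Rightarrow> ereal" where
  "dual_fun h K \<Gamma> P lam mu = (INF S\<in>{S::complex^'n^'n. psd S}. lagrangian h K \<Gamma> P S lam mu)"

definition dual_optimal :: "(nat \<Rightarrow> complex^'n) \<Rightarrow> nat \<Rightarrow> real \<Rightarrow> real \<Rightarrow> real \<Rightarrow> (nat \<Rightarrow> real) \<Rightarrow> bool" where
  "dual_optimal h K \<Gamma> P lam mu \<longleftrightarrow> 0 \<le> lam \<and> (\<forall>k<K. 0 \<le> mu k) \<and>
     (\<forall>lam' mu'. 0 \<le> lam' \<and> (\<forall>k<K. 0 \<le> mu' k) \<longrightarrow> dual_fun h K \<Gamma> P lam' mu' \<le> dual_fun h K \<Gamma> P lam mu)"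

definition primal_optimal :: "(nat \<Rightarrow> complex^'n) \<Rightarrow> nat \<Rightarrow> real \<Rightarrow> real \<Rightarrow> complex^'n^'n \<Rightarrow> bool" where
  "primal_optimal h K \<Gamma> P S \<longleftrightarrow> feasible h K \<Gamma> P S \<and> (\<forall>S'. feasible h K \<Gamma> P S' \<longrightarrow> obj S \<le> obj S')"

end

theory Submission
  imports Defs
begin

text \<open>
  Write \<open>A = lam I - (\<Sum>k. mu k h\<^sub>k h\<^sub>k\<^sup>H)\<close>. For \<open>S \<succ> 0\<close> and Hermitian \<open>N\<close>, expanding
  \<open>(S\<^sup>-\<^sup>1 - N) S (S\<^sup>-\<^sup>1 - N) \<succeq> 0\<close> gives \<open>tr S\<^sup>-\<^sup>1 \<ge> 2 tr N - tr (N\<^sup>2 S)\<close>. With \<open>N = A\<^sup>1\<^sup>/\<^sup>2\<close> this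
  bounds the Lagrangian below by \<open>2 tr A\<^sup>1\<^sup>/\<^sup>2 + \<Gamma> (\<Sum>k. mu k) - lam P\<close>, with equality at
  \<open>S = A\<^sup>-\<^sup>1\<^sup>/\<^sup>2\<close>.

  If \<open>A\<close> had an eigenvalue \<open>\<le> 0\<close>, raising \<open>lam\<close> would strictly increase the dual function,
  contradicting dual optimality; hence \<open>A \<succ> 0\<close>. Perturbing \<open>A\<close> to \<open>A + t E\<close> and taking
  \<open>N = A\<^sup>1\<^sup>/\<^sup>2 + t F - \<kappa> t\<^sup>2 I\<close>, where \<open>A\<^sup>1\<^sup>/\<^sup>2 F + F A\<^sup>1\<^sup>/\<^sup>2 = E\<close>, shows that the dual function
  grows at least like \<open>t tr (A\<^sup>-\<^sup>1\<^sup>/\<^sup>2 E) - O(t\<^sup>2)\<close>. Dual optimality in the directions of \<open>lam\<close> and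
  of each \<open>mu k\<close> then gives primal feasibility and complementary slackness for \<open>A\<^sup>-\<^sup>1\<^sup>/\<^sup>2\<close>, and
  weak duality makes it optimal.
\<close>

lemma matrix_add_rdistrib: "((A::'a::semiring_1^'n^'m) + B) ** C = A ** C + B ** C"
  by (vector matrix_matrix_mult_def sum.distrib[symmetric] field_simps)

lemma matrix_diff_ldistrib: "(A::'a::ring_1^'n^'m) ** (B - C) = A ** B - A ** C"
  by (vector matrix_matrix_mult_def sum_subtractf[symmetric] field_simps)

lemma matrix_diff_rdistrib: "((A::'a::ring_1^'n^'m) - B) ** C = A ** C - B ** C"
  by (vector matrix_matrix_mult_def sum_subtractf[symmetric] field_simps)

lemma matrix_mult_scaleR_left: "(k *\<^sub>R (A::'a::real_algebra_1^'n^'m)) ** B = k *\<^sub>R (A ** B)"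
  by (simp add: scalar_matrix_assoc)

lemma matrix_mult_scaleR_right: "(A::'a::real_algebra_1^'n^'m) ** (k *\<^sub>R B) = k *\<^sub>R (A ** B)"
  by (simp add: matrix_scalar_ac scalar_matrix_assoc)

lemma matrix_uminus_mult: "(- A :: 'a::ring_1^'n^'m) ** B = - (A ** B)"
  by (vector matrix_matrix_mult_def sum_negf[symmetric])

lemma matrix_sum_rdistrib: "(sum f S :: 'a::semiring_1^'n^'m) ** B = (\<Sum>k\<in>S. f k ** B)"
  by (induction S rule: infinite_finite_induct) (auto simp: matrix_add_rdistrib)

lemma trace_scaleR: "trace (k *\<^sub>R (A::'a::real_algebra_1^'n^'n)) = k *\<^sub>R trace A"
  by (simp add: trace_def scaleR_sum_right)

lemma trace_sum: "trace (sum f S :: 'a::comm_semiring_1^'n^'n) = (\<Sum>k\<in>S. trace (f k))"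
  unfolding trace_def by (simp add: sum_component, rule sum.swap)

lemma trace_uminus: "trace (- A :: 'a::comm_ring_1^'n^'n) = - trace A"
  by (simp add: trace_def sum_negf)

section \<open>Hermitian and positive semidefinite matrices\<close>

lemma cadj_matrix_mult: "cadj ((A::complex^'n^'m) ** B) = cadj B ** cadj A"
  unfolding cadj_def matrix_matrix_mult_def vec_eq_iff by (simp add: mult.commute)

lemma cadj_cadj [simp]: "cadj (cadj A) = A"
  by (simp add: cadj_def vec_eq_iff)

lemma cadj_mat_1 [simp]: "cadj (mat 1 :: complex^'n^'n) = mat 1"
  by (simp add: cadj_def mat_def vec_eq_iff)

lemma hermitian_add: "hermitian A \<Longrightarrow> hermitian B \<Longrightarrow> hermitian (A + B)"
  by (simp add: hermitian_def cadj_def vec_eq_iff)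

lemma hermitian_diff: "hermitian A \<Longrightarrow> hermitian B \<Longrightarrow> hermitian (A - B)"
  by (simp add: hermitian_def cadj_def vec_eq_iff)

lemma hermitian_uminus: "hermitian A \<Longrightarrow> hermitian (- A)"
  by (simp add: hermitian_def cadj_def vec_eq_iff)

lemma hermitian_scaleR: "hermitian A \<Longrightarrow> hermitian (k *\<^sub>R A)"
  by (simp add: hermitian_def cadj_def vec_eq_iff)

lemma hermitian_mat_1: "hermitian (mat 1 :: complex^'n^'n)"
  by (simp add: hermitian_def)

lemma hermitian_outer: "hermitian (outer v)"
  by (simp add: hermitian_def cadj_def outer_def vec_eq_iff mult.commute)

lemma hermitian_cadj_sandwich: "hermitian M \<Longrightarrow> hermitian (cadj V ** M ** V)"
  by (simp add: hermitian_def cadj_matrix_mult matrix_mul_assoc)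

lemma hermitian_entry: "hermitian A \<Longrightarrow> cnj (A $ j $ i) = A $ i $ j"
  unfolding hermitian_def cadj_def vec_eq_iff by (drule spec[of _ i]) simp

lemma matrix_inv_unique:
  fixes A B :: "'a::field^'n^'n"
  assumes "A ** B = mat 1"
  shows "invertible A" and "matrix_inv A = B"
proof -
  show inv: "invertible A"
    using assms invertible_right_inverse by blast
  then have "matrix_inv A ** A = mat 1"
    unfolding invertible_def matrix_inv_def by (rule someI2_ex) blast
  then have "matrix_inv A = matrix_inv A ** (A ** B)"
    using assms by (simp add: matrix_mul_assoc)
  with \<open>matrix_inv A ** A = mat 1\<close> show "matrix_inv A = B"
    by (simp add: matrix_mul_assoc)
qed

lemma matrix_inv_right:
  "invertible (A::'a::semiring_1^'n^'m) \<Longrightarrow> A ** matrix_inv A = mat 1"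
  unfolding invertible_def matrix_inv_def by (drule someI_ex) blast

lemma matrix_inv_left:
  "invertible (A::'a::field^'n^'n) \<Longrightarrow> matrix_inv A ** A = mat 1"
  using matrix_inv_right matrix_left_right_inverse by blast

lemma hermitian_matrix_inv:
  fixes S :: "complex^'n^'n"
  assumes "hermitian S" "invertible S"
  shows "hermitian (matrix_inv S)"
proof -
  have "S ** cadj (matrix_inv S) = mat 1"
    using matrix_inv_left[OF assms(2)] assms(1) by (metis cadj_mat_1 cadj_matrix_mult hermitian_def)
  then show ?thesis
    unfolding hermitian_def by (metis matrix_inv_unique(2))
qed

lemma rank_invertible:
  fixes A :: "'a::field^'n^'n"
  assumes "invertible A"
  shows "rank A = CARD('n)"
proof -
  have "vec.span (rows A) = UNIV"
    using assms invertible_left_inverse matrix_left_invertible_span_rows_gen by blast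
  then have "rank A = vec.dim (UNIV :: ('a^'n) set)"
    by (metis row_rank_def_gen vec.dim_span)
  also have "\<dots> = CARD('n)"
    by (rule vec_dim_card)
  finally show ?thesis .
qed

lemma qform_eq_trace_outer: "qform M x = trace (M ** outer x)"
  unfolding qform_def trace_def matrix_matrix_mult_def outer_def matrix_vector_mult_def
  by (simp add: sum_distrib_left mult_ac)

lemma trace_outer_mult: "trace (outer x ** M) = qform M x"
  unfolding qform_eq_trace_outer by (rule trace_mul_sym)

lemma psd_outer: "psd (outer x)"
proof -
  have "0 \<le> Re (qform (outer x) v)" for v
  proof -
    let ?z = "\<Sum>j\<in>UNIV. cnj (v $ j) * x $ j"
    have "qform (outer x) v = ?z * cnj ?z"
      unfolding qform_def outer_def matrix_vector_mult_def
      by (simp add: sum_distrib_left sum_distrib_right mult_ac)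
    moreover have "0 \<le> Re (w * cnj w)" for w :: complex
      by (simp add: complex_mult_cnj)
    ultimately show ?thesis
      by (simp only:)
  qed
  then show ?thesis
    by (simp add: psd_def hermitian_outer)
qed

lemma diag_cadj_sandwich: "(cadj V ** M ** V) $ i $ i = qform M (column i V)"
proof -
  have "(cadj V ** M ** V) $ i $ i = (\<Sum>k\<in>UNIV. (\<Sum>j\<in>UNIV. cnj (V $ j $ i) * M $ j $ k) * V $ k $ i)"
    by (simp add: matrix_matrix_mult_def cadj_def)
  also have "\<dots> = (\<Sum>j\<in>UNIV. cnj (V $ j $ i) * (\<Sum>k\<in>UNIV. M $ j $ k * V $ k $ i))"
    unfolding sum_distrib_left sum_distrib_right by (subst sum.swap) (simp add: mult_ac)
  finally show ?thesis
    by (simp add: qform_def matrix_vector_mult_def column_def)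
qed

lemma psd_diag:
  assumes "psd S"
  shows "0 \<le> Re (S $ i $ i)" and "Im (S $ i $ i) = 0"
proof -
  have "qform S (axis i 1) = S $ i $ i"
    by (simp add: qform_def matrix_vector_mult_def axis_def if_distrib if_distribR cong: if_cong)
  then show "0 \<le> Re (S $ i $ i)"
    using assms by (metis psd_def)
  have "cnj (S $ i $ i) = S $ i $ i"
    using assms by (simp add: psd_def hermitian_entry)
  then show "Im (S $ i $ i) = 0"
    by (metis cnj.simps(2) neg_equal_zero)
qed

lemma psd_trace_nonneg: "psd S \<Longrightarrow> 0 \<le> Re (trace S)"
  by (simp add: trace_def Re_sum sum_nonneg psd_diag)

lemma sum_UNIV_two_points:
  fixes f :: "'n::finite \<Rightarrow> 'a::comm_monoid_add"
  assumes "i \<noteq> j" and "\<And>b. b \<notin> {i, j} \<Longrightarrow> f b = 0"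
  shows "(\<Sum>b\<in>UNIV. f b) = f i + f j"
proof -
  have "(\<Sum>b\<in>UNIV. f b) = (\<Sum>b\<in>{i, j}. f b)"
    by (rule sum.mono_neutral_right) (auto simp: assms(2))
  then show ?thesis
    using assms(1) by simp
qed

lemma psd_offdiag:
  fixes S :: "complex^'n^'n"
  assumes "psd S" "i \<noteq> j"
  shows "2 * cmod (S $ i $ j) \<le> Re (S $ i $ i) + Re (S $ j $ j)"
proof (cases "S $ i $ j = 0")
  case True
  then show ?thesis
    using psd_diag[OF assms(1)] by simp
next
  case False
  let ?r = "cmod (S $ i $ j)"
  have r: "?r \<noteq> 0"
    using False by simp
  \<comment> \<open>test vector \<open>e\<^sub>i + z e\<^sub>j\<close>, the phase \<open>z\<close> chosen so that \<open>S\<^sub>i\<^sub>j z = -\<bar>S\<^sub>i\<^sub>j\<bar>\<close>\<close>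
  define z where "z = - cnj (S $ i $ j) / complex_of_real ?r"
  define x :: "complex^'n" where "x = (\<chi> b. if b = i then 1 else if b = j then z else 0)"
  have x: "x $ i = 1" "x $ j = z" "\<And>b. b \<notin> {i, j} \<Longrightarrow> x $ b = 0"
    using assms(2) by (auto simp: x_def)
  have Sx: "(S *v x) $ a = S $ a $ i + S $ a $ j * z" for a
    unfolding matrix_vector_mult_def vec_lambda_beta
    by (subst sum_UNIV_two_points[OF assms(2)]) (auto simp: x)
  have Sji: "S $ j $ i = cnj (S $ i $ j)"
    using assms(1) by (simp add: psd_def hermitian_entry)
  have Sij_z: "S $ i $ j * z = - complex_of_real ?r"
    using r complex_norm_square[of "S $ i $ j"] by (simp add: z_def power2_eq_square field_simps)
  have zz: "cnj z * z = 1"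
    using r complex_norm_square[of "S $ i $ j"] by (simp add: z_def power2_eq_square field_simps)
  have "qform S x = cnj (x $ i) * (S *v x) $ i + cnj (x $ j) * (S *v x) $ j"
    unfolding qform_def by (rule sum_UNIV_two_points[OF assms(2)]) (simp add: x)
  also have "\<dots> = S $ i $ i + S $ i $ j * z + cnj (S $ i $ j * z) + cnj z * z * S $ j $ j"
    by (simp add: x Sx Sji algebra_simps)
  finally have "Re (qform S x) = Re (S $ i $ i) - 2 * ?r + Re (S $ j $ j)"
    by (simp add: Sij_z zz)
  moreover have "0 \<le> Re (qform S x)"
    using assms(1) by (simp add: psd_def)
  ultimately show ?thesis
    by linarith
qed

lemma psd_entry_bound:
  assumes "psd S"
  shows "cmod (S $ i $ j) \<le> Re (trace S)"
proof (cases "i = j")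
  case True
  have "cmod (S $ i $ i) = Re (S $ i $ i)"
    using psd_diag[OF assms, of i] by (simp add: cmod_def)
  also have "\<dots> \<le> Re (trace S)"
    unfolding trace_def Re_sum by (rule member_le_sum) (auto simp: psd_diag[OF assms])
  finally show ?thesis
    using True by simp
next
  case False
  have "Re (S $ i $ i) + Re (S $ j $ j) = (\<Sum>k\<in>{i, j}. Re (S $ k $ k))"
    using False by simp
  also have "\<dots> \<le> Re (trace S)"
    unfolding trace_def Re_sum by (rule sum_mono2) (auto simp: psd_diag[OF assms])
  finally show ?thesis
    using psd_offdiag[OF assms False] psd_diag[OF assms, of i] psd_diag[OF assms, of j]
    by linarith
qed

lemma abs_Re_trace_mult_psd_le:
  assumes "psd S"
  shows "\<bar>Re (trace (F ** S))\<bar> \<le> (\<Sum>i\<in>UNIV. \<Sum>k\<in>UNIV. cmod (F $ i $ k)) * Re (trace S)"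
proof -
  have "\<bar>Re (trace (F ** S))\<bar> \<le> cmod (trace (F ** S))"
    by (rule abs_Re_le_cmod)
  also have "\<dots> \<le> (\<Sum>i\<in>UNIV. \<Sum>k\<in>UNIV. cmod (F $ i $ k) * cmod (S $ k $ i))"
    unfolding trace_def matrix_matrix_mult_def
    by (simp, rule order_trans[OF norm_sum sum_mono], rule order_trans[OF norm_sum sum_mono],
        simp add: norm_mult)
  also have "\<dots> \<le> (\<Sum>i\<in>UNIV. \<Sum>k\<in>UNIV. cmod (F $ i $ k) * Re (trace S))"
    by (intro sum_mono mult_left_mono psd_entry_bound[OF assms]) auto
  finally show ?thesis
    by (simp add: sum_distrib_right)
qed

lemma trace_matrix_inv_ge:
  fixes S N :: "complex^'n^'n"
  assumes S: "psd S" "invertible S" and N: "hermitian N"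
  shows "2 * Re (trace N) - Re (trace (N ** N ** S)) \<le> Re (trace (matrix_inv S))"
proof -
  define Y where "Y = matrix_inv S - N"
  have "hermitian Y"
    unfolding Y_def using S N by (auto intro: hermitian_diff hermitian_matrix_inv simp: psd_def)
  then have "trace (Y ** S ** Y) = (\<Sum>i\<in>UNIV. qform S (column i Y))"
    unfolding trace_def hermitian_def using diag_cadj_sandwich[of Y S] by metis
  then have "0 \<le> Re (trace (Y ** S ** Y))"
    using S(1) by (simp add: Re_sum sum_nonneg psd_def)
  moreover have "Y ** S ** Y = (mat 1 - N ** S) ** (matrix_inv S - N)"
    by (simp add: Y_def matrix_diff_rdistrib matrix_inv_left[OF S(2)])
  then have "Y ** S ** Y = matrix_inv S - N - N + N ** S ** N"
    by (simp add: matrix_diff_ldistrib matrix_diff_rdistrib matrix_inv_right[OF S(2)]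
        flip: matrix_mul_assoc)
  moreover have "trace (N ** S ** N) = trace (N ** N ** S)"
    using trace_mul_sym[of "N ** S" N] by (simp add: matrix_mul_assoc)
  ultimately have "0 \<le> Re (trace (matrix_inv S)) - Re (trace N) - Re (trace N) + Re (trace (N ** N ** S))"
    by (simp only: trace_add trace_sub minus_complex.sel plus_complex.sel)
  then show ?thesis
    by linarith
qed

lemma square_perturbation_expand:
  fixes R F :: "complex^'n^'n"
  shows "(R + t *\<^sub>R F - s *\<^sub>R mat 1) ** (R + t *\<^sub>R F - s *\<^sub>R mat 1) =
    R ** R + t *\<^sub>R (R ** F + F ** R) + (t * t) *\<^sub>R (F ** F) - (2 * s) *\<^sub>R R
      - (2 * s * t) *\<^sub>R F + (s * s) *\<^sub>R mat 1"
proof -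
  let ?N = "R + t *\<^sub>R F - s *\<^sub>R mat 1"
  have NN: "?N ** ?N = ?N ** R + t *\<^sub>R (?N ** F) - s *\<^sub>R ?N"
    by (simp only: matrix_add_ldistrib matrix_diff_ldistrib matrix_mult_scaleR_right matrix_mul_rid)
  have NR: "?N ** R = R ** R + t *\<^sub>R (F ** R) - s *\<^sub>R R"
    by (simp only: matrix_add_rdistrib matrix_diff_rdistrib matrix_mult_scaleR_left matrix_mul_lid)
  have NF: "?N ** F = R ** F + t *\<^sub>R (F ** F) - s *\<^sub>R F"
    by (simp only: matrix_add_rdistrib matrix_diff_rdistrib matrix_mult_scaleR_left matrix_mul_lid)
  show ?thesis
    unfolding NN NR NF vec_eq_iff by (simp add: scaleR_conv_of_real algebra_simps)
qed

lemma perturbation_remainder_nonneg: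
  fixes T r f g m c1 c2 \<kappa> t :: real
  assumes T: "0 \<le> T" and r: "m * T \<le> r" and f: "\<bar>f\<bar> \<le> c2 * T" and g: "g \<le> c1 * T"
    and \<kappa>: "0 \<le> \<kappa>" "\<kappa> * m = c1 + 1" and c1: "0 \<le> c1"
    and small: "2 * \<kappa> * c2 * \<bar>t\<bar> + \<kappa>\<^sup>2 * t\<^sup>2 \<le> 1"
  shows "0 \<le> 2 * (\<kappa> * t\<^sup>2) * r + 2 * (\<kappa> * t\<^sup>2) * t * f - t\<^sup>2 * g - (\<kappa> * t\<^sup>2)\<^sup>2 * T"
proof -
  have "c1 * T + T \<le> \<kappa> * r"
    using mult_left_mono[OF r \<kappa>(1)] \<kappa>(2) by (simp add: algebra_simps flip: mult.assoc)
  moreover have "- (\<kappa> * c2 * \<bar>t\<bar> * T) \<le> \<kappa> * (t * f)"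
  proof -
    have "\<bar>t * f\<bar> \<le> \<bar>t\<bar> * (c2 * T)"
      using mult_left_mono[OF f abs_ge_zero[of t]] by (simp add: abs_mult)
    then have "- (\<bar>t\<bar> * (c2 * T)) \<le> t * f"
      by linarith
    from mult_left_mono[OF this \<kappa>(1)] show ?thesis
      by (simp add: mult_ac)
  qed
  moreover have "2 * (\<kappa> * c2 * \<bar>t\<bar> * T) + \<kappa>\<^sup>2 * t\<^sup>2 * T \<le> T"
    using mult_right_mono[OF small T] by (simp add: algebra_simps)
  moreover have "0 \<le> c1 * T"
    using c1 T by simp
  ultimately have "0 \<le> 2 * (\<kappa> * r) + 2 * (\<kappa> * (t * f)) - g - \<kappa>\<^sup>2 * t\<^sup>2 * T"
    using g T by linarith
  then have "0 \<le> t\<^sup>2 * (2 * (\<kappa> * r) + 2 * (\<kappa> * (t * f)) - g - \<kappa>\<^sup>2 * t\<^sup>2 * T)"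
    by simp
  also have "\<dots> = 2 * (\<kappa> * t\<^sup>2) * r + 2 * (\<kappa> * t\<^sup>2) * t * f - t\<^sup>2 * g - (\<kappa> * t\<^sup>2)\<^sup>2 * T"
    by (simp add: algebra_simps power2_eq_square)
  finally show ?thesis .
qed

section \<open>Diagonal matrices and the Sylvester equation\<close>

lemma cdiag_mult_left: "(cdiag d ** M) $ i $ j = d i * M $ i $ j"
proof -
  have "(cdiag d ** M) $ i $ j = (\<Sum>k\<in>UNIV. if k = i then d i * M $ k $ j else 0)"
    unfolding matrix_matrix_mult_def cdiag_def vec_lambda_beta by (rule sum.cong) auto
  then show ?thesis
    by simp
qed

lemma cdiag_mult_right: "(M ** cdiag d) $ i $ j = M $ i $ j * d j"
proof -
  have "(M ** cdiag d) $ i $ j = (\<Sum>k\<in>UNIV. if k = j then M $ i $ j * d j else 0)"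
    unfolding matrix_matrix_mult_def cdiag_def vec_lambda_beta by (rule sum.cong) auto
  then show ?thesis
    by simp
qed

lemma cdiag_mult: "cdiag d ** cdiag e = cdiag (\<lambda>i. d i * e i)"
  unfolding vec_eq_iff cdiag_mult_left by (simp add: cdiag_def)

lemma cdiag_add: "cdiag (\<lambda>i. d i + e i) = cdiag d + cdiag e"
  by (simp add: cdiag_def vec_eq_iff)

lemma cadj_cdiag_of_real:
  "cadj (cdiag (\<lambda>i. complex_of_real (d i))) = cdiag (\<lambda>i. complex_of_real (d i))"
  by (simp add: cadj_def cdiag_def vec_eq_iff)

lemma trace_cdiag_mult: "trace (cdiag d ** M) = (\<Sum>i\<in>UNIV. d i * M $ i $ i)"
  unfolding trace_def cdiag_mult_left ..

definition sylvester_diag :: "('n \<Rightarrow> real) \<Rightarrow> complex^'n^'n \<Rightarrow> complex^'n^'n" where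
  "sylvester_diag a M = (\<chi> i j. M $ i $ j / complex_of_real (a i + a j))"

lemma sylvester_diag_eq:
  assumes "\<And>i j. a i + a j \<noteq> 0"
  shows "cdiag (\<lambda>i. complex_of_real (a i)) ** sylvester_diag a M
      + sylvester_diag a M ** cdiag (\<lambda>i. complex_of_real (a i)) = M"
proof -
  have "complex_of_real (a i) * (M $ i $ j / complex_of_real (a i + a j))
      + M $ i $ j / complex_of_real (a i + a j) * complex_of_real (a j) = M $ i $ j" for i j
    using assms[of i j] by (simp add: field_simps del: of_real_add) (simp add: algebra_simps)
  then show ?thesis
    by (simp add: vec_eq_iff sylvester_diag_def cdiag_mult_left cdiag_mult_right)
qed

lemma hermitian_sylvester_diag: "hermitian M \<Longrightarrow> hermitian (sylvester_diag a M)"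
  unfolding hermitian_def vec_eq_iff cadj_def sylvester_diag_def
  using hermitian_entry[of M] by (simp add: hermitian_def add.commute)

lemma Re_trace_sylvester_diag: "2 * Re (trace (sylvester_diag a M)) = (\<Sum>i\<in>UNIV. Re (M $ i $ i) / a i)"
  by (simp add: trace_def sylvester_diag_def Re_sum sum_distrib_left Re_divide_of_real
      del: of_real_add)

lemma Re_trace_Amat_mult:
  "Re (trace (Amat h K lam mu ** S)) = lam * Re (trace S) - (\<Sum>k<K. mu k * Re (qform S (h k)))"
proof -
  have "Amat h K lam mu ** S = lam *\<^sub>R S - (\<Sum>k<K. mu k *\<^sub>R (outer (h k) ** S))"
    unfolding Amat_def matrix_diff_rdistrib matrix_sum_rdistrib matrix_mult_scaleR_left
      matrix_mul_lid ..
  then show ?thesis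
    by (simp add: trace_sub trace_sum trace_scaleR trace_outer_mult Re_sum)
qed

lemma lagrangian_eq:
  "lagrangian h K \<Gamma> P S lam mu =
     obj S + ereal (Re (trace (Amat h K lam mu ** S)) + \<Gamma> * (\<Sum>k<K. mu k) - lam * P)"
  by (simp add: lagrangian_def obj_def)

lemma Amat_add_lam: "Amat h K (lam + t) mu = Amat h K lam mu + t *\<^sub>R mat 1"
  by (simp add: Amat_def scaleR_add_left algebra_simps)

lemma Amat_add_mu:
  assumes "k < K"
  shows "Amat h K lam (mu(k := mu k + t)) = Amat h K lam mu + t *\<^sub>R (- outer (h k))"
proof -
  have "(\<Sum>i<K. (mu(k := mu k + t)) i *\<^sub>R outer (h i))
      = (\<Sum>i<K. mu i *\<^sub>R outer (h i)) + t *\<^sub>R outer (h k)"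
    using assms by (simp add: sum.remove[of "{..<K}" k] scaleR_add_left)
  then show ?thesis
    by (simp add: Amat_def)
qed

lemma sum_lessThan_upd_add:
  fixes mu :: "nat \<Rightarrow> real"
  assumes "k < K"
  shows "(\<Sum>i<K. (mu(k := mu k + t)) i) = (\<Sum>i<K. mu i) + t"
  using assms by (simp add: sum.remove[of "{..<K}" k])

lemma dual_fun_le_lagrangian:
  "psd S \<Longrightarrow> dual_fun h K \<Gamma> P lam mu \<le> lagrangian h K \<Gamma> P S lam mu"
  unfolding dual_fun_def by (rule INF_lower) simp

lemma dual_fun_ge:
  "(\<And>S. psd S \<Longrightarrow> c \<le> lagrangian h K \<Gamma> P S lam mu) \<Longrightarrow> c \<le> dual_fun h K \<Gamma> P lam mu"
  unfolding dual_fun_def by (rule INF_greatest) simp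

section \<open>Matrices diagonalised by a fixed unitary\<close>

definition unitary_diag :: "complex^'n^'n \<Rightarrow> ('n \<Rightarrow> real) \<Rightarrow> complex^'n^'n" where
  "unitary_diag U d = U ** cdiag (\<lambda>i. complex_of_real (d i)) ** cadj U"

locale unitary_frame =
  fixes U :: "complex^'n^'n"
  assumes unitary: "unitary U"
begin

lemma cadj_mult_self: "cadj U ** U = mat 1"
  and mult_cadj_self: "U ** cadj U = mat 1"
  using unitary by (auto simp: unitary_def)

lemma unitary_similar_mult: "(U ** M ** cadj U) ** (U ** M' ** cadj U) = U ** (M ** M') ** cadj U"
proof -
  have "(U ** M ** cadj U) ** (U ** M' ** cadj U) = U ** M ** (cadj U ** U) ** M' ** cadj U"
    by (simp add: matrix_mul_assoc)
  then show ?thesis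
    by (simp add: cadj_mult_self matrix_mul_assoc)
qed

lemma trace_unitary_similar: "trace (U ** M ** cadj U) = trace M"
proof -
  have "trace (U ** M ** cadj U) = trace (M ** (cadj U ** U))"
    using trace_mul_sym[of U "M ** cadj U"] by (simp add: matrix_mul_assoc)
  then show ?thesis
    by (simp add: cadj_mult_self)
qed

lemma unitary_diag_mult:
  "unitary_diag U d ** unitary_diag U e = unitary_diag U (\<lambda>i. d i * e i)"
  by (simp add: unitary_diag_def unitary_similar_mult cdiag_mult)

lemma unitary_diag_add:
  "unitary_diag U (\<lambda>i. d i + e i) = unitary_diag U d + unitary_diag U e"
  by (simp add: unitary_diag_def cdiag_add matrix_add_ldistrib matrix_add_rdistrib)

lemma unitary_diag_const: "unitary_diag U (\<lambda>_. c) = c *\<^sub>R mat 1"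
proof -
  have "cdiag (\<lambda>_. complex_of_real c) = c *\<^sub>R mat 1"
    by (simp add: cdiag_def mat_def vec_eq_iff of_real_def)
  moreover have "U ** (c *\<^sub>R mat 1) ** cadj U = c *\<^sub>R mat 1"
    by (simp add: matrix_scalar_ac scalar_matrix_assoc[symmetric] mult_cadj_self)
  ultimately show ?thesis
    unfolding unitary_diag_def by metis
qed

lemma hermitian_unitary_diag: "hermitian (unitary_diag U d)"
  unfolding unitary_diag_def
  using hermitian_cadj_sandwich[of "cdiag (\<lambda>i. complex_of_real (d i))" "cadj U"]
  by (simp add: hermitian_def cadj_cdiag_of_real)

lemma trace_unitary_diag_mult:
  "trace (unitary_diag U d ** S) = (\<Sum>i\<in>UNIV. complex_of_real (d i) * qform S (column i U))"
proof -
  have "trace (unitary_diag U d ** S) = trace (cdiag (\<lambda>i. complex_of_real (d i)) ** (cadj U ** S ** U))"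
    unfolding unitary_diag_def
    using trace_mul_sym[of U "cdiag (\<lambda>i. complex_of_real (d i)) ** cadj U ** S"]
    by (simp add: matrix_mul_assoc)
  then show ?thesis
    by (simp add: trace_cdiag_mult diag_cadj_sandwich)
qed

lemma Re_trace_unitary_diag_mult:
  "Re (trace (unitary_diag U d ** S)) = (\<Sum>i\<in>UNIV. d i * Re (qform S (column i U)))"
  by (simp add: trace_unitary_diag_mult Re_sum)

lemma Re_trace_eq_sum_qform: "Re (trace S) = (\<Sum>i\<in>UNIV. Re (qform S (column i U)))"
  using Re_trace_unitary_diag_mult[of "\<lambda>_. 1" S] by (simp add: unitary_diag_const)

lemma trace_unitary_diag: "trace (unitary_diag U d) = (\<Sum>i\<in>UNIV. complex_of_real (d i))"
  unfolding unitary_diag_def trace_unitary_similar by (simp add: trace_def cdiag_def)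

lemma psd_unitary_diag:
  assumes "\<And>i. 0 \<le> d i"
  shows "psd (unitary_diag U d)"
proof -
  have "0 \<le> Re (qform (unitary_diag U d) x)" for x
  proof -
    have "Re (qform (unitary_diag U d) x) = (\<Sum>i\<in>UNIV. d i * Re (qform (outer x) (column i U)))"
      by (simp only: qform_eq_trace_outer[of "unitary_diag U d"] Re_trace_unitary_diag_mult)
    then show ?thesis
      using psd_outer[of x] by (simp add: psd_def assms sum_nonneg)
  qed
  then show ?thesis
    by (simp add: psd_def hermitian_unitary_diag)
qed

lemma matrix_inv_unitary_diag:
  assumes "\<And>i. d i \<noteq> 0"
  shows "invertible (unitary_diag U d)" and "matrix_inv (unitary_diag U d) = unitary_diag U (\<lambda>i. 1 / d i)"
proof -
  have "unitary_diag U d ** unitary_diag U (\<lambda>i. 1 / d i) = mat 1"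
    using assms by (simp add: unitary_diag_mult unitary_diag_const)
  then show "invertible (unitary_diag U d)" "matrix_inv (unitary_diag U d) = unitary_diag U (\<lambda>i. 1 / d i)"
    by (auto dest: matrix_inv_unique)
qed

lemma obj_unitary_diag:
  assumes "\<And>i. 0 < d i"
  shows "obj (unitary_diag U d) = ereal (\<Sum>i\<in>UNIV. 1 / d i)"
  using assms matrix_inv_unitary_diag[of d]
  by (simp add: obj_def trace_unitary_diag Re_sum less_imp_neq[symmetric])

lemma obj_plus_trace_ge:
  assumes "\<And>i. 0 \<le> \<beta> i" and "psd S"
  shows "ereal (2 * (\<Sum>i\<in>UNIV. sqrt (\<beta> i))) \<le> obj S + ereal (Re (trace (unitary_diag U \<beta> ** S)))"
proof (cases "invertible S")
  case True
  define N where "N = unitary_diag U (\<lambda>i. sqrt (\<beta> i))"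
  have "N ** N = unitary_diag U \<beta>"
    using assms(1) by (simp add: N_def unitary_diag_mult)
  moreover have "hermitian N"
    by (simp add: N_def hermitian_unitary_diag)
  ultimately have "2 * Re (trace N) - Re (trace (unitary_diag U \<beta> ** S)) \<le> Re (trace (matrix_inv S))"
    using trace_matrix_inv_ge[OF assms(2) True] by metis
  then show ?thesis
    using True by (simp add: obj_def N_def trace_unitary_diag Re_sum)
qed (simp add: obj_def)

lemma Re_trace_unitary_diag_mult_ge:
  assumes "\<And>i. m \<le> d i" and "psd S"
  shows "m * Re (trace S) \<le> Re (trace (unitary_diag U d ** S))"
  unfolding Re_trace_eq_sum_qform[of S] Re_trace_unitary_diag_mult sum_distrib_left
  using assms by (intro sum_mono mult_right_mono) (auto simp: psd_def)

lemma sylvester_solution: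
  assumes a_pos: "\<And>i. 0 < a i" and E: "hermitian E"
  obtains F where "hermitian F" and "unitary_diag U a ** F + F ** unitary_diag U a = E"
    and "2 * Re (trace F) = Re (trace (unitary_diag U (\<lambda>i. 1 / a i) ** E))"
proof -
  define D where "D = cdiag (\<lambda>i. complex_of_real (a i))"
  define X where "X = sylvester_diag a (cadj U ** E ** U)"
  have "a i + a j \<noteq> 0" for i j
    using a_pos[of i] a_pos[of j] by linarith
  then have DX: "D ** X + X ** D = cadj U ** E ** U"
    unfolding D_def X_def by (rule sylvester_diag_eq)
  show thesis
  proof (rule that[of "U ** X ** cadj U"])
    have "hermitian X"
      unfolding X_def by (intro hermitian_sylvester_diag hermitian_cadj_sandwich E)
    then show "hermitian (U ** X ** cadj U)"
      using hermitian_cadj_sandwich[of X "cadj U"] by simp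
    have "unitary_diag U a ** (U ** X ** cadj U) + (U ** X ** cadj U) ** unitary_diag U a
        = U ** (D ** X + X ** D) ** cadj U"
      by (simp add: unitary_diag_def D_def unitary_similar_mult matrix_add_ldistrib matrix_add_rdistrib)
    also have "\<dots> = (U ** cadj U) ** E ** (U ** cadj U)"
      by (simp add: DX matrix_mul_assoc)
    finally show "unitary_diag U a ** (U ** X ** cadj U) + (U ** X ** cadj U) ** unitary_diag U a = E"
      by (simp add: mult_cadj_self)
    show "2 * Re (trace (U ** X ** cadj U)) = Re (trace (unitary_diag U (\<lambda>i. 1 / a i) ** E))"
      by (simp add: trace_unitary_similar X_def Re_trace_sylvester_diag diag_cadj_sandwich
          Re_trace_unitary_diag_mult)
  qed
qed

text \<open>Apply the matrix inequality with \<open>N = B + t F - \<kappa> t\<^sup>2 I\<close>, where \<open>B = U diag a U\<^sup>H\<close> and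
  \<open>B F + F B = E\<close>: then \<open>B\<^sup>2 + t E - N\<^sup>2 = 2 \<kappa> t\<^sup>2 B + O(t\<^sup>3)\<close>, and the choice of \<open>\<kappa>\<close> makes this
  remainder nonnegative against every \<open>S \<succeq> 0\<close>.\<close>
lemma trace_matrix_inv_perturbed_ge:
  fixes F E S :: "complex^'n^'n"
  assumes F: "hermitian F" and BF: "unitary_diag U a ** F + F ** unitary_diag U a = E"
    and m: "\<And>i. m \<le> a i"
    and c1: "(\<Sum>i\<in>UNIV. \<Sum>k\<in>UNIV. cmod ((F ** F) $ i $ k)) \<le> c1"
    and c2: "(\<Sum>i\<in>UNIV. \<Sum>k\<in>UNIV. cmod (F $ i $ k)) \<le> c2"
    and \<kappa>: "0 \<le> \<kappa>" "\<kappa> * m = c1 + 1"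
    and small: "2 * \<kappa> * c2 * \<bar>t\<bar> + \<kappa>\<^sup>2 * t\<^sup>2 \<le> 1"
    and S: "psd S" "invertible S"
  shows "2 * (\<Sum>i\<in>UNIV. a i) + 2 * t * Re (trace F) - 2 * \<kappa> * CARD('n) * t\<^sup>2
    \<le> Re (trace (matrix_inv S)) + Re (trace ((unitary_diag U (\<lambda>i. (a i)\<^sup>2) + t *\<^sub>R E) ** S))"
proof -
  define B where "B = unitary_diag U a"
  define s where "s = \<kappa> * t\<^sup>2"
  define N where "N = B + t *\<^sub>R F - s *\<^sub>R mat 1"
  have "hermitian N"
    unfolding N_def B_def
    by (intro hermitian_diff hermitian_add hermitian_scaleR hermitian_unitary_diag F hermitian_mat_1)
  have BB: "B ** B = unitary_diag U (\<lambda>i. (a i)\<^sup>2)"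
    by (simp add: B_def unitary_diag_mult power2_eq_square)
  have T: "0 \<le> Re (trace S)"
    by (rule psd_trace_nonneg[OF S(1)])
  have "Re (trace ((unitary_diag U (\<lambda>i. (a i)\<^sup>2) + t *\<^sub>R E - N ** N) ** S))
      = 2 * s * Re (trace (B ** S)) + 2 * s * t * Re (trace (F ** S))
        - t\<^sup>2 * Re (trace ((F ** F) ** S)) - s\<^sup>2 * Re (trace S)"
    unfolding N_def square_perturbation_expand BF[folded B_def] BB
    by (simp add: matrix_add_rdistrib matrix_diff_rdistrib scalar_matrix_assoc[symmetric]
        matrix_uminus_mult trace_add trace_sub trace_uminus trace_scaleR power2_eq_square)
  also have "0 \<le> \<dots>"
    unfolding s_def
  proof (rule perturbation_remainder_nonneg[OF T _ _ _ \<kappa> _ small])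
    show "m * Re (trace S) \<le> Re (trace (B ** S))"
      unfolding B_def by (rule Re_trace_unitary_diag_mult_ge[OF m S(1)])
    show "\<bar>Re (trace (F ** S))\<bar> \<le> c2 * Re (trace S)"
      using abs_Re_trace_mult_psd_le[OF S(1), of F] mult_right_mono[OF c2 T] by linarith
    show "Re (trace ((F ** F) ** S)) \<le> c1 * Re (trace S)"
      using abs_Re_trace_mult_psd_le[OF S(1), of "F ** F"] mult_right_mono[OF c1 T] by linarith
    have "0 \<le> (\<Sum>i\<in>UNIV. \<Sum>k\<in>UNIV. cmod ((F ** F) $ i $ k))"
      by (intro sum_nonneg norm_ge_zero)
    with c1 show "0 \<le> c1"
      by linarith
  qed
  finally have "Re (trace (N ** N ** S))
      \<le> Re (trace ((unitary_diag U (\<lambda>i. (a i)\<^sup>2) + t *\<^sub>R E) ** S))"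
    by (simp add: matrix_diff_rdistrib trace_sub)
  moreover have "2 * Re (trace N) = 2 * (\<Sum>i\<in>UNIV. a i) + 2 * t * Re (trace F)
      - 2 * \<kappa> * CARD('n) * t\<^sup>2"
    unfolding N_def
    by (simp add: B_def s_def trace_add trace_sub trace_scaleR trace_I trace_unitary_diag Re_sum
        algebra_simps)
  ultimately show ?thesis
    using trace_matrix_inv_ge[OF S \<open>hermitian N\<close>] by linarith
qed

lemma obj_plus_trace_perturbed_ge:
  assumes a_pos: "\<And>i. 0 < a i" and E: "hermitian E"
  obtains C where "\<forall>\<^sub>F t in at 0. \<forall>S. psd S \<longrightarrow>
    ereal (2 * (\<Sum>i\<in>UNIV. a i) + t * Re (trace (unitary_diag U (\<lambda>i. 1 / a i) ** E)) - C * t\<^sup>2)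
      \<le> obj S + ereal (Re (trace ((unitary_diag U (\<lambda>i. (a i)\<^sup>2) + t *\<^sub>R E) ** S)))"
proof -
  obtain F where F: "hermitian F" and BF: "unitary_diag U a ** F + F ** unitary_diag U a = E"
    and trF: "2 * Re (trace F) = Re (trace (unitary_diag U (\<lambda>i. 1 / a i) ** E))"
    by (rule sylvester_solution[OF a_pos E])
  define m where "m = Min (range a)"
  have m: "0 < m" "\<And>i. m \<le> a i"
    using a_pos by (auto simp: m_def)
  define c1 where "c1 = (\<Sum>i\<in>UNIV. \<Sum>k\<in>UNIV. cmod ((F ** F) $ i $ k))"
  define c2 where "c2 = (\<Sum>i\<in>UNIV. \<Sum>k\<in>UNIV. cmod (F $ i $ k))"
  define \<kappa> where "\<kappa> = (c1 + 1) / m"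
  have "0 \<le> c1"
    unfolding c1_def by (intro sum_nonneg norm_ge_zero)
  with m(1) have \<kappa>: "0 \<le> \<kappa>" "\<kappa> * m = c1 + 1"
    by (auto simp: \<kappa>_def)
  have "((\<lambda>t. 2 * \<kappa> * c2 * \<bar>t\<bar> + \<kappa>\<^sup>2 * t\<^sup>2) \<longlongrightarrow> 2 * \<kappa> * c2 * \<bar>0\<bar> + \<kappa>\<^sup>2 * 0\<^sup>2) (at 0)"
    by (intro tendsto_intros)
  from order_tendstoD(2)[OF this, of 1]
  have "\<forall>\<^sub>F t in at 0. 2 * \<kappa> * c2 * \<bar>t\<bar> + \<kappa>\<^sup>2 * t\<^sup>2 < 1"
    by simp
  then have "\<forall>\<^sub>F t in at 0. \<forall>S. psd S \<longrightarrow>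
    ereal (2 * (\<Sum>i\<in>UNIV. a i) + t * Re (trace (unitary_diag U (\<lambda>i. 1 / a i) ** E))
      - 2 * \<kappa> * CARD('n) * t\<^sup>2)
    \<le> obj S + ereal (Re (trace ((unitary_diag U (\<lambda>i. (a i)\<^sup>2) + t *\<^sub>R E) ** S)))"
  proof eventually_elim
    case (elim t)
    have "2 * (\<Sum>i\<in>UNIV. a i) + t * Re (trace (unitary_diag U (\<lambda>i. 1 / a i) ** E))
        - 2 * \<kappa> * CARD('n) * t\<^sup>2
      \<le> Re (trace (matrix_inv S)) + Re (trace ((unitary_diag U (\<lambda>i. (a i)\<^sup>2) + t *\<^sub>R E) ** S))"
      if "psd S" "invertible S" for S
      using trace_matrix_inv_perturbed_ge[OF F BF m(2) c1_def[symmetric, THEN eq_refl]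
          c2_def[symmetric, THEN eq_refl] \<kappa> less_imp_le[OF elim] that]
      by (simp add: mult_ac flip: trF)
    then show ?case
      by (simp add: obj_def)
  qed
  then show thesis
    by (rule that)
qed

lemma dual_fun_ge_unitary_diag:
  assumes "Amat h K lam mu = unitary_diag U \<beta>" and "\<And>i. 0 \<le> \<beta> i"
  shows "ereal (2 * (\<Sum>i\<in>UNIV. sqrt (\<beta> i)) + \<Gamma> * (\<Sum>k<K. mu k) - lam * P)
    \<le> dual_fun h K \<Gamma> P lam mu"
proof (rule dual_fun_ge)
  fix S :: "complex^'n^'n"
  assume "psd S"
  from obj_plus_trace_ge[OF assms(2) this]
  show "ereal (2 * (\<Sum>i\<in>UNIV. sqrt (\<beta> i)) + \<Gamma> * (\<Sum>k<K. mu k) - lam * P)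
      \<le> lagrangian h K \<Gamma> P S lam mu"
    unfolding lagrangian_eq assms(1) by (cases "obj S") auto
qed

lemma lagrangian_unitary_diag:
  assumes "Amat h K lam mu = unitary_diag U \<beta>" and "\<And>i. 0 < d i"
  shows "lagrangian h K \<Gamma> P (unitary_diag U d) lam mu
    = ereal ((\<Sum>i\<in>UNIV. 1 / d i) + (\<Sum>i\<in>UNIV. \<beta> i * d i) + \<Gamma> * (\<Sum>k<K. mu k) - lam * P)"
  unfolding lagrangian_eq assms(1) obj_unitary_diag[OF assms(2)]
  by (simp add: unitary_diag_mult trace_unitary_diag Re_sum)

end

section \<open>First-order optimality\<close>

lemma nonpos_if_eventually_le_square:
  fixes x C :: real
  assumes "\<forall>\<^sub>F t in at_right 0. t * x \<le> C * t\<^sup>2"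
  shows "x \<le> 0"
proof (rule tendsto_lowerbound)
  have "((\<lambda>t. C * t) \<longlongrightarrow> C * 0) (at_right 0)"
    by (intro tendsto_intros)
  then show "((\<lambda>t. C * t) \<longlongrightarrow> 0) (at_right 0)"
    by simp
  show "\<forall>\<^sub>F t in at_right 0. x \<le> C * t"
    using assms eventually_at_right_less[of 0]
  proof eventually_elim
    case (elim t)
    then have "t * x \<le> t * (C * t)"
      by (simp add: power2_eq_square mult_ac)
    with \<open>0 < t\<close> show ?case
      by simp
  qed
qed simp

lemma eventually_at_right_of_at:
  fixes P :: "real \<Rightarrow> bool"
  shows "\<forall>\<^sub>F t in at 0. P t \<Longrightarrow> \<forall>\<^sub>F t in at_right 0. P t"
  by (rule filter_leD[OF at_le[OF subset_UNIV]])

text \<open>\<open>t x\<close> is the first-order gain of moving a multiplier \<open>c \<ge> 0\<close> to \<open>c + t \<ge> 0\<close>; if it is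
  \<open>O(t\<^sup>2)\<close>, then \<open>x \<le> 0\<close> (feasibility) and \<open>c x = 0\<close> (complementary slackness).\<close>
lemma first_order_condition:
  fixes c x C :: real
  assumes c: "0 \<le> c" and opt: "\<forall>\<^sub>F t in at 0. 0 \<le> c + t \<longrightarrow> t * x \<le> C * t\<^sup>2"
  shows "x \<le> 0" and "c * x = 0"
proof -
  have "\<forall>\<^sub>F t in at_right 0. t * x \<le> C * t\<^sup>2"
    using eventually_at_right_of_at[OF opt] eventually_at_right_less[of 0]
    by eventually_elim (use c in simp)
  then show "x \<le> 0"
    by (rule nonpos_if_eventually_le_square)
  show "c * x = 0"
  proof (cases "c = 0")
    case False
    have "\<forall>\<^sub>F t in at 0. - c < t"
      using False c by (intro order_tendstoD(1)[OF tendsto_ident_at]) simp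
    with opt have "\<forall>\<^sub>F t in at 0. t * x \<le> C * t\<^sup>2"
      by eventually_elim simp
    then have "\<forall>\<^sub>F t in filtermap uminus (at 0). t * x \<le> C * t\<^sup>2"
      using filtermap_at_minus[of "0::real"] by simp
    then have "\<forall>\<^sub>F t in at 0. t * (- x) \<le> C * t\<^sup>2"
      by (simp add: eventually_filtermap)
    then have "- x \<le> 0"
      by (intro nonpos_if_eventually_le_square eventually_at_right_of_at)
    with \<open>x \<le> 0\<close> show ?thesis
      by simp
  qed simp
qed

section \<open>The optimal dual point\<close>

locale dual_optimum = unitary_frame U for U :: "complex^'n^'n" +
  fixes h :: "nat \<Rightarrow> complex^'n" and K :: nat and \<Gamma> P lam :: real
    and mu :: "nat \<Rightarrow> real" and \<alpha> :: "'n \<Rightarrow> real"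
  assumes P_pos: "0 < P"
    and dual_opt: "dual_optimal h K \<Gamma> P lam mu"
    and Amat_eq: "Amat h K lam mu = unitary_diag U \<alpha>"
begin

lemma lam_nonneg: "0 \<le> lam"
  and mu_nonneg: "\<forall>k<K. 0 \<le> mu k"
  and dual_fun_le_opt: "0 \<le> lam' \<Longrightarrow> (\<forall>k<K. 0 \<le> mu' k) \<Longrightarrow>
    dual_fun h K \<Gamma> P lam' mu' \<le> dual_fun h K \<Gamma> P lam mu"
  using dual_opt by (auto simp: dual_optimal_def)

text \<open>Test the dual function at \<open>lam\<close> with \<open>S = (A + \<delta> I)\<^sup>-\<^sup>1\<^sup>/\<^sup>2\<close> and bound it at \<open>lam + \<delta>\<close> from
  below: the difference is at least \<open>\<delta> ((\<Sum>i. 1 / sqrt (\<alpha> i + \<delta>)) - P)\<close>.\<close>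
lemma dual_fun_less_shift:
  assumes \<delta>: "0 < \<delta>" and pos: "\<And>i. 0 < \<alpha> i + \<delta>"
    and large: "P < (\<Sum>i\<in>UNIV. 1 / sqrt (\<alpha> i + \<delta>))"
  shows "dual_fun h K \<Gamma> P lam mu < dual_fun h K \<Gamma> P (lam + \<delta>) mu"
proof -
  define b where "b i = sqrt (\<alpha> i + \<delta>)" for i
  have b_pos: "0 < b i" for i
    using pos by (simp add: b_def)
  have \<alpha>_div_b: "\<alpha> i / b i = b i - \<delta> / b i" for i
  proof -
    have "\<alpha> i = (b i)\<^sup>2 - \<delta>"
      using pos[of i] by (simp add: b_def)
    then show ?thesis
      using b_pos[of i] by (simp add: field_simps power2_eq_square)
  qed
  have "dual_fun h K \<Gamma> P lam mu \<le> lagrangian h K \<Gamma> P (unitary_diag U (\<lambda>i. 1 / b i)) lam mu"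
    using b_pos by (intro dual_fun_le_lagrangian psd_unitary_diag) (simp add: less_imp_le)
  also have "\<dots> = ereal (2 * (\<Sum>i\<in>UNIV. b i) - \<delta> * (\<Sum>i\<in>UNIV. 1 / b i) + \<Gamma> * (\<Sum>k<K. mu k) - lam * P)"
    using b_pos by (simp add: lagrangian_unitary_diag[OF Amat_eq] \<alpha>_div_b sum_subtractf
        sum_distrib_left)
  also have "\<dots> < ereal (2 * (\<Sum>i\<in>UNIV. b i) + \<Gamma> * (\<Sum>k<K. mu k) - (lam + \<delta>) * P)"
    using mult_strict_left_mono[OF large \<delta>] by (simp add: b_def algebra_simps)
  also have "\<dots> \<le> dual_fun h K \<Gamma> P (lam + \<delta>) mu"
    unfolding b_def
  proof (rule dual_fun_ge_unitary_diag)
    show "Amat h K (lam + \<delta>) mu = unitary_diag U (\<lambda>i. \<alpha> i + \<delta>)"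
      by (simp add: Amat_add_lam Amat_eq unitary_diag_add unitary_diag_const)
  qed (use pos in \<open>simp add: less_imp_le\<close>)
  finally show ?thesis .
qed

lemma eigenvalues_pos: "0 < \<alpha> i"
proof (rule ccontr)
  have "Min (range \<alpha>) \<in> range \<alpha>"
    by (rule Min_in) simp_all
  then obtain j where "\<alpha> j = Min (range \<alpha>)"
    by (metis imageE)
  then have j: "\<And>i. \<alpha> j \<le> \<alpha> i"
    by simp
  assume "\<not> 0 < \<alpha> i"
  with j[of i] have "\<alpha> j \<le> 0"
    by simp
  \<comment> \<open>shift the smallest eigenvalue to \<open>1 / (4 P\<^sup>2)\<close>, so that \<open>1 / sqrt (\<alpha> j + \<delta>) = 2 P\<close>\<close>
  define \<delta> where "\<delta> = 1 / (4 * P\<^sup>2) - \<alpha> j"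
  have quarter_pos: "0 < 1 / (4 * P\<^sup>2)"
    using P_pos by simp
  with \<open>\<alpha> j \<le> 0\<close> have \<delta>: "0 < \<delta>"
    unfolding \<delta>_def by linarith
  have pos: "0 < \<alpha> i + \<delta>" for i
    using j[of i] quarter_pos unfolding \<delta>_def by linarith
  have "P < 1 / sqrt (\<alpha> j + \<delta>)"
    using P_pos by (simp add: \<delta>_def real_sqrt_divide real_sqrt_mult)
  also have "\<dots> \<le> (\<Sum>i\<in>UNIV. 1 / sqrt (\<alpha> i + \<delta>))"
    using pos by (intro member_le_sum) (auto simp: less_imp_le)
  finally have "dual_fun h K \<Gamma> P lam mu < dual_fun h K \<Gamma> P (lam + \<delta>) mu"
    by (rule dual_fun_less_shift[OF \<delta> pos])
  moreover have "dual_fun h K \<Gamma> P (lam + \<delta>) mu \<le> dual_fun h K \<Gamma> P lam mu"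
    using lam_nonneg mu_nonneg \<delta> by (intro dual_fun_le_opt) auto
  ultimately show False
    by simp
qed

definition S_opt :: "complex^'n^'n" where
  "S_opt = unitary_diag U (\<lambda>i. 1 / sqrt (\<alpha> i))"

lemma psd_S_opt: "psd S_opt"
  unfolding S_opt_def using eigenvalues_pos by (intro psd_unitary_diag) (simp add: less_imp_le)

lemma obj_S_opt: "obj S_opt = ereal (\<Sum>i\<in>UNIV. sqrt (\<alpha> i))"
  unfolding S_opt_def using eigenvalues_pos by (simp add: obj_unitary_diag)

lemma Re_trace_Amat_S_opt: "Re (trace (Amat h K lam mu ** S_opt)) = (\<Sum>i\<in>UNIV. sqrt (\<alpha> i))"
proof -
  have "\<alpha> i * (1 / sqrt (\<alpha> i)) = sqrt (\<alpha> i)" for i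
    using eigenvalues_pos[of i] by (simp add: field_simps real_sqrt_mult_self flip: real_sqrt_mult)
  then show ?thesis
    by (simp add: Amat_eq S_opt_def unitary_diag_mult trace_unitary_diag Re_sum)
qed

lemma dual_fun_opt_le:
  "dual_fun h K \<Gamma> P lam mu \<le> ereal (2 * (\<Sum>i\<in>UNIV. sqrt (\<alpha> i)) + \<Gamma> * (\<Sum>k<K. mu k) - lam * P)"
proof -
  have "dual_fun h K \<Gamma> P lam mu \<le> lagrangian h K \<Gamma> P S_opt lam mu"
    by (rule dual_fun_le_lagrangian[OF psd_S_opt])
  then show ?thesis
    by (simp add: lagrangian_eq obj_S_opt Re_trace_Amat_S_opt) (simp add: algebra_simps)
qed

lemma dual_fun_perturbed_ge:
  assumes "hermitian E"
  obtains C where "\<forall>\<^sub>F t in at 0. \<forall>lam' mu'. Amat h K lam' mu' = Amat h K lam mu + t *\<^sub>R E \<longrightarrow>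
      ereal (2 * (\<Sum>i\<in>UNIV. sqrt (\<alpha> i)) + t * Re (trace (S_opt ** E)) - C * t\<^sup>2
        + \<Gamma> * (\<Sum>k<K. mu' k) - lam' * P) \<le> dual_fun h K \<Gamma> P lam' mu'"
proof -
  define a where "a i = sqrt (\<alpha> i)" for i
  have a_pos: "0 < a i" for i
    using eigenvalues_pos by (simp add: a_def)
  have "Amat h K lam mu = unitary_diag U (\<lambda>i. (a i)\<^sup>2)"
    using eigenvalues_pos by (simp add: a_def Amat_eq less_imp_le)
  moreover have "unitary_diag U (\<lambda>i. 1 / a i) = S_opt"
    by (simp add: S_opt_def a_def)
  moreover obtain C where "\<forall>\<^sub>F t in at 0. \<forall>S. psd S \<longrightarrow>
      ereal (2 * (\<Sum>i\<in>UNIV. a i) + t * Re (trace (unitary_diag U (\<lambda>i. 1 / a i) ** E)) - C * t\<^sup>2)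
        \<le> obj S + ereal (Re (trace ((unitary_diag U (\<lambda>i. (a i)\<^sup>2) + t *\<^sub>R E) ** S)))"
    by (rule obj_plus_trace_perturbed_ge[OF a_pos assms])
  ultimately have "\<forall>\<^sub>F t in at 0. \<forall>S. psd S \<longrightarrow>
      ereal (2 * (\<Sum>i\<in>UNIV. sqrt (\<alpha> i)) + t * Re (trace (S_opt ** E)) - C * t\<^sup>2)
        \<le> obj S + ereal (Re (trace ((Amat h K lam mu + t *\<^sub>R E) ** S)))"
    by (simp add: a_def)
  then have "\<forall>\<^sub>F t in at 0. \<forall>lam' mu'. Amat h K lam' mu' = Amat h K lam mu + t *\<^sub>R E \<longrightarrow>
      ereal (2 * (\<Sum>i\<in>UNIV. sqrt (\<alpha> i)) + t * Re (trace (S_opt ** E)) - C * t\<^sup>2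
        + \<Gamma> * (\<Sum>k<K. mu' k) - lam' * P) \<le> dual_fun h K \<Gamma> P lam' mu'"
  proof (eventually_elim, intro allI impI dual_fun_ge)
    case (elim t)
    fix lam' mu' and S :: "complex^'n^'n"
    assume "Amat h K lam' mu' = Amat h K lam mu + t *\<^sub>R E" and "psd S"
    with elim show "ereal (2 * (\<Sum>i\<in>UNIV. sqrt (\<alpha> i)) + t * Re (trace (S_opt ** E)) - C * t\<^sup>2
        + \<Gamma> * (\<Sum>k<K. mu' k) - lam' * P) \<le> lagrangian h K \<Gamma> P S lam' mu'"
      unfolding lagrangian_eq by (cases "obj S") auto
  qed
  then show thesis
    by (rule that)
qed

lemma dual_optimal_perturbation_le:
  assumes "hermitian E"
  obtains C where "\<forall>\<^sub>F t in at 0. \<forall>lam' mu'. 0 \<le> lam' \<longrightarrow> (\<forall>k<K. 0 \<le> mu' k) \<longrightarrow>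
      Amat h K lam' mu' = Amat h K lam mu + t *\<^sub>R E \<longrightarrow>
      t * Re (trace (S_opt ** E)) + \<Gamma> * (\<Sum>k<K. mu' k) - lam' * P
        \<le> C * t\<^sup>2 + \<Gamma> * (\<Sum>k<K. mu k) - lam * P"
proof -
  obtain C where C: "\<forall>\<^sub>F t in at 0. \<forall>lam' mu'. Amat h K lam' mu' = Amat h K lam mu + t *\<^sub>R E \<longrightarrow>
      ereal (2 * (\<Sum>i\<in>UNIV. sqrt (\<alpha> i)) + t * Re (trace (S_opt ** E)) - C * t\<^sup>2
        + \<Gamma> * (\<Sum>k<K. mu' k) - lam' * P) \<le> dual_fun h K \<Gamma> P lam' mu'"
    by (rule dual_fun_perturbed_ge[OF assms])
  have "\<forall>\<^sub>F t in at 0. \<forall>lam' mu'. 0 \<le> lam' \<longrightarrow> (\<forall>k<K. 0 \<le> mu' k) \<longrightarrow>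
      Amat h K lam' mu' = Amat h K lam mu + t *\<^sub>R E \<longrightarrow>
      t * Re (trace (S_opt ** E)) + \<Gamma> * (\<Sum>k<K. mu' k) - lam' * P
        \<le> C * t\<^sup>2 + \<Gamma> * (\<Sum>k<K. mu k) - lam * P"
    using C
  proof (eventually_elim, intro allI impI)
    case (elim t)
    fix lam' mu'
    assume "0 \<le> lam'" "\<forall>k<K. 0 \<le> mu' k" "Amat h K lam' mu' = Amat h K lam mu + t *\<^sub>R E"
    with elim have "ereal (2 * (\<Sum>i\<in>UNIV. sqrt (\<alpha> i)) + t * Re (trace (S_opt ** E)) - C * t\<^sup>2
        + \<Gamma> * (\<Sum>k<K. mu' k) - lam' * P) \<le> dual_fun h K \<Gamma> P lam mu"
      using dual_fun_le_opt order_trans by blast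
    also note dual_fun_opt_le
    finally show "t * Re (trace (S_opt ** E)) + \<Gamma> * (\<Sum>k<K. mu' k) - lam' * P
        \<le> C * t\<^sup>2 + \<Gamma> * (\<Sum>k<K. mu k) - lam * P"
      by simp
  qed
  then show thesis
    by (rule that)
qed

lemma S_opt_trace:
  shows "Re (trace S_opt) \<le> P" and "lam * Re (trace S_opt) = lam * P"
proof -
  obtain C where C: "\<forall>\<^sub>F t in at 0. \<forall>lam' mu'. 0 \<le> lam' \<longrightarrow> (\<forall>k<K. 0 \<le> mu' k) \<longrightarrow>
      Amat h K lam' mu' = Amat h K lam mu + t *\<^sub>R mat 1 \<longrightarrow>
      t * Re (trace (S_opt ** mat 1)) + \<Gamma> * (\<Sum>k<K. mu' k) - lam' * P
        \<le> C * t\<^sup>2 + \<Gamma> * (\<Sum>k<K. mu k) - lam * P"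
    using dual_optimal_perturbation_le[OF hermitian_mat_1] by blast
  have "\<forall>\<^sub>F t in at 0. 0 \<le> lam + t \<longrightarrow> t * (Re (trace S_opt) - P) \<le> C * t\<^sup>2"
    using C
  proof eventually_elim
    case (elim t)
    show ?case
    proof
      assume "0 \<le> lam + t"
      from elim[rule_format, OF this mu_nonneg[rule_format] Amat_add_lam]
      show "t * (Re (trace S_opt) - P) \<le> C * t\<^sup>2"
        by (simp add: algebra_simps)
    qed
  qed
  from first_order_condition[OF lam_nonneg this]
  show "Re (trace S_opt) \<le> P" and "lam * Re (trace S_opt) = lam * P"
    by (simp_all add: algebra_simps)
qed

lemma S_opt_qform:
  assumes k: "k < K"
  shows "\<Gamma> \<le> Re (qform S_opt (h k))" and "mu k * Re (qform S_opt (h k)) = mu k * \<Gamma>"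
proof -
  obtain C where C: "\<forall>\<^sub>F t in at 0. \<forall>lam' mu'. 0 \<le> lam' \<longrightarrow> (\<forall>k<K. 0 \<le> mu' k) \<longrightarrow>
      Amat h K lam' mu' = Amat h K lam mu + t *\<^sub>R (- outer (h k)) \<longrightarrow>
      t * Re (trace (S_opt ** - outer (h k))) + \<Gamma> * (\<Sum>k<K. mu' k) - lam' * P
        \<le> C * t\<^sup>2 + \<Gamma> * (\<Sum>k<K. mu k) - lam * P"
    using dual_optimal_perturbation_le[OF hermitian_uminus[OF hermitian_outer]] by blast
  have trace_eq: "Re (trace (S_opt ** - outer (h k))) = - Re (qform S_opt (h k))"
    by (simp add: trace_mul_sym[of S_opt] matrix_uminus_mult trace_uminus trace_outer_mult)
  have "\<forall>\<^sub>F t in at 0. 0 \<le> mu k + t \<longrightarrow> t * (\<Gamma> - Re (qform S_opt (h k))) \<le> C * t\<^sup>2"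
    using C
  proof eventually_elim
    case (elim t)
    show ?case
    proof
      assume "0 \<le> mu k + t"
      then have "\<And>i. i < K \<Longrightarrow> 0 \<le> (mu(k := mu k + t)) i"
        using mu_nonneg by simp
      from elim[rule_format, OF lam_nonneg this Amat_add_mu[OF k]]
      show "t * (\<Gamma> - Re (qform S_opt (h k))) \<le> C * t\<^sup>2"
        by (simp only: sum_lessThan_upd_add[OF k] trace_eq) (simp add: algebra_simps)
    qed
  qed
  from first_order_condition[OF mu_nonneg[rule_format, OF k] this]
  show "\<Gamma> \<le> Re (qform S_opt (h k))" and "mu k * Re (qform S_opt (h k)) = mu k * \<Gamma>"
    by (auto simp: algebra_simps)
qed

lemma S_opt_feasible: "feasible h K \<Gamma> P S_opt"
  using psd_S_opt S_opt_trace(1) S_opt_qform(1) by (simp add: feasible_def)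

text \<open>Weak duality: for feasible \<open>S\<close>, \<open>tr S\<^sup>-\<^sup>1 \<ge> 2 tr A\<^sup>1\<^sup>/\<^sup>2 - tr (A S) \<ge> 2 tr A\<^sup>1\<^sup>/\<^sup>2 - tr (A S_opt)\<close>,
  the last step by complementary slackness.\<close>
lemma S_opt_primal_optimal: "primal_optimal h K \<Gamma> P S_opt"
proof -
  have slack: "(\<Sum>k<K. mu k * Re (qform S_opt (h k))) = \<Gamma> * (\<Sum>k<K. mu k)"
    by (simp add: S_opt_qform(2) sum_distrib_left mult.commute)
  have "obj S_opt \<le> obj S" if S: "feasible h K \<Gamma> P S" for S
  proof -
    have "\<Gamma> * (\<Sum>k<K. mu k) = (\<Sum>k<K. mu k * \<Gamma>)"
      by (simp add: sum_distrib_left mult.commute)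
    also have "\<dots> \<le> (\<Sum>k<K. mu k * Re (qform S (h k)))"
      using S mu_nonneg by (intro sum_mono mult_left_mono) (auto simp: feasible_def)
    finally have "\<Gamma> * (\<Sum>k<K. mu k) \<le> (\<Sum>k<K. mu k * Re (qform S (h k)))" .
    moreover have "lam * Re (trace S) \<le> lam * P"
      using S lam_nonneg by (auto simp: feasible_def intro: mult_left_mono)
    ultimately have "Re (trace (Amat h K lam mu ** S)) \<le> (\<Sum>i\<in>UNIV. sqrt (\<alpha> i))"
      using Re_trace_Amat_S_opt S_opt_trace(2) slack
      unfolding Re_trace_Amat_mult by linarith
    moreover have "ereal (2 * (\<Sum>i\<in>UNIV. sqrt (\<alpha> i))) \<le> obj S + ereal (Re (trace (Amat h K lam mu ** S)))"
      using S eigenvalues_pos unfolding Amat_eq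
      by (intro obj_plus_trace_ge) (auto simp: feasible_def less_imp_le)
    ultimately show ?thesis
      unfolding obj_S_opt by (cases "obj S") auto
  qed
  with S_opt_feasible show ?thesis
    by (simp add: primal_optimal_def)
qed

end

theorem proposition1:
  fixes h :: "nat \<Rightarrow> complex^('n::{finite,linorder})"
    and K :: nat and \<Gamma> P lam :: real and mu :: "nat \<Rightarrow> real"
    and U :: "complex^('n::{finite,linorder})^('n::{finite,linorder})" and \<alpha> :: "'n \<Rightarrow> real"
  assumes "K \<ge> 1" and "\<Gamma> \<ge> 0" and "P > 0"
    and "strictly_feasible h K \<Gamma> P"
    and "dual_optimal h K \<Gamma> P lam mu"
    and "unitary U"
    and "Amat h K lam mu = U ** cdiag (\<lambda>i. complex_of_real (\<alpha> i)) ** cadj U"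
    and "\<And>i j. i \<le> j \<Longrightarrow> \<alpha> j \<le> \<alpha> i"
  shows "rank (Amat h K lam mu) = CARD('n) \<and> (\<forall>i. \<alpha> i > 0) \<and>
    primal_optimal h K \<Gamma> P (U ** cdiag (\<lambda>i. complex_of_real (\<alpha> i powr (-1/2))) ** cadj U)"
proof -
  interpret dual_optimum U h K \<Gamma> P lam mu \<alpha>
    using assms(3,5,6,7) by unfold_locales (simp_all add: unitary_diag_def)
  have "invertible (Amat h K lam mu)"
    using eigenvalues_pos by (simp add: Amat_eq matrix_inv_unitary_diag less_imp_neq[symmetric])
  moreover have "\<alpha> i powr (-1/2) = 1 / sqrt (\<alpha> i)" for i
    using eigenvalues_pos[of i] by (simp add: powr_minus_divide powr_half_sqrt flip: minus_divide_left)
  then have "U ** cdiag (\<lambda>i. complex_of_real (\<alpha> i powr (-1/2))) ** cadj U = S_opt"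
    by (simp add: S_opt_def unitary_diag_def)
  ultimately show ?thesis
    using rank_invertible eigenvalues_pos S_opt_primal_optimal by simp
qed

end
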